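(* Let $q$ be a power of an odd prime and $d\ge 3$ an integer. Any set $A\subset\mathbb{F}_q$ with $|A|\gg q^{1/2}$ has $\gg |A|^d$ square-sum-type tuples, i.e. tuples $(x_1,\dots,x_d)\in A^d$ such that $x_1^2+\cdots+x_d^2$ is a square in $\mathbb{F}_q$.
   Context: An element $t\in\mathbb{F}_q$ is a square if $t=u^2$ for some $u\in\mathbb{F}_q$. $X\ll Y$ means $X\le CY$ for a constant $C>0$ independent of $q$ and $A$ (the hypothesis $|A|\gg q^{1/2}$ means $|A|\ge c\,q^{1/2}$ for a suitable such constant $c$). *)

theory Defs
  imports "HOL-Algebra.Algebra" "HOL-Computational_Algebra.Primes"
begin

definition is_square_in :: "('a, 'b) ring_scheme \<Rightarrow> 'a \<Rightarrow> bool" where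
  "is_square_in R t \<longleftrightarrow> (\<exists>u \<in> carrier R. t = u \<otimes>\<^bsub>R\<^esub> u)"

definition square_sum_tuples :: "('a, 'b) ring_scheme \<Rightarrow> 'a set \<Rightarrow> nat \<Rightarrow> (nat \<Rightarrow> 'a) set" where
  "square_sum_tuples R A d =
     {x \<in> {..<d} \<rightarrow>\<^sub>E A. is_square_in R (finsum R (\<lambda>i. x i \<otimes>\<^bsub>R\<^esub> x i) {..<d})}"

end

theory Submission
  imports Defs
begin

(*
  Let r(t) be the number of square roots of t, so r(t) <= 2 and r(t) = 0 unless t is a square,
  and let g(v) = (SUM b:A. r(v + b^2)). Then SUM_v g(v) = |A| q, and since a hyperbola
  y^2 - y'^2 = delta with delta <> 0 has at most q points (y - y' determines y + y' in odd
  characteristic), SUM_v g(v)^2 <= |A|^2 q + 2 |A| q, i.e. SUM_v (g(v) - |A|)^2 <= 2 |A| q.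
  As a |-> s + a^2 is at most two-to-one, the values g(s + a^2) for a in A deviate from |A| by
  at most 4 |A| q in square sum, so by g >= 3|A|/4 - (g - |A|)^2/|A| they add up to at least
  3|A|^2/4 - 4q >= |A|^2/2 once |A|^2 >= 16 q.
  Since g(v) <= 2 #{b in A. v + b^2 is a square}, at least |A|^2 / 4 pairs (a, b) in A^2 make
  s + a^2 + b^2 a square, for every s; fixing all but two coordinates then gives |A|^d / 4
  square-sum tuples for every d >= 2. In characteristic 2 every element is a square.
*)

lemma ge_three_quarters_minus_deviation:
  fixes g m :: real
  assumes "m > 0"
  shows "3 * m / 4 - (g - m) ^ 2 / m \<le> g"
proof -
  have "g - (3 * m / 4 - (g - m) ^ 2 / m) = (g - m / 2) ^ 2 / m"
    using assms by (simp add: field_simps power2_eq_square)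
  then show ?thesis using assms by (metis diff_ge_0_iff_ge divide_nonneg_pos zero_le_power2)
qed

context abelian_group
begin

lemma sum_add_shift:
  assumes "u \<in> carrier G"
  shows "(\<Sum>v\<in>carrier G. f (v \<oplus> u)) = (\<Sum>v\<in>carrier G. f v)"
  by (rule sum.reindex_bij_witness[of _ "\<lambda>v. v \<ominus> u" "\<lambda>v. v \<oplus> u"])
    (use assms in \<open>auto simp: minus_eq a_assoc r_neg l_neg\<close>)

end

context domain
begin

lemma square_eq_square_imp:
  assumes "x \<in> carrier R" "y \<in> carrier R" "x \<otimes> x = y \<otimes> y"
  shows "x = y \<or> x = \<ominus> y"
proof -
  have "(x \<ominus> y) \<otimes> (x \<oplus> y) = \<zero>" using assms by algebra
  then have "x \<ominus> y = \<zero> \<or> x \<oplus> y = \<zero>" using assms by (simp add: integral_iff)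
  then show ?thesis using assms by (auto simp: sum_zero_eq_neg)
qed

definition square_roots :: "'a \<Rightarrow> 'a set" where
  "square_roots t = {y \<in> carrier R. y \<otimes> y = t}"

lemma square_roots_subset:
  assumes "y \<in> square_roots t"
  shows "square_roots t \<subseteq> {y, \<ominus> y}"
  using assms square_eq_square_imp by (auto simp: square_roots_def)

lemma finite_square_roots: "finite (square_roots t)"
proof (cases "square_roots t = {}")
  case False
  then obtain y where "y \<in> square_roots t" by blast
  then show ?thesis by (rule finite_subset[OF square_roots_subset]) simp
qed simp

lemma card_square_roots_le: "card (square_roots t) \<le> 2"
proof (cases "square_roots t = {}")
  case False
  then obtain y where "y \<in> square_roots t" by blast
  then have "card (square_roots t) \<le> card {y, \<ominus> y}"
    by (intro card_mono square_roots_subset) auto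
  also have "\<dots> \<le> 2" by (simp add: card_insert_if)
  finally show ?thesis .
qed simp

lemma square_roots_eq_empty_iff: "square_roots t = {} \<longleftrightarrow> \<not> is_square_in R t"
  by (auto simp: square_roots_def is_square_in_def)

lemma is_square_in_if_char_two:
  assumes fin: "finite (carrier R)" and char_two: "\<one> \<oplus> \<one> = \<zero>" and t: "t \<in> carrier R"
  shows "is_square_in R t"
proof -
  have neg_eq: "\<ominus> y = y" if "y \<in> carrier R" for y
  proof -
    have "y \<oplus> y = (\<one> \<oplus> \<one>) \<otimes> y" using that by algebra
    then show ?thesis using char_two that by (simp add: minus_equality)
  qed
  have "inj_on (\<lambda>x. x \<otimes> x) (carrier R)"
    by (rule inj_onI) (metis square_eq_square_imp neg_eq)
  then have "(\<lambda>x. x \<otimes> x) ` carrier R = carrier R"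
    using fin by (intro endo_inj_surj) auto
  then show ?thesis using t unfolding is_square_in_def by blast
qed

lemma sum_card_square_roots:
  assumes "finite (carrier R)"
  shows "(\<Sum>t\<in>carrier R. card (square_roots t)) = card (carrier R)"
proof -
  have "(\<Sum>t\<in>carrier R. \<Sum>y\<in>{y. y \<in> carrier R \<and> y \<otimes> y = t}. 1::nat) = (\<Sum>y\<in>carrier R. 1)"
    using assms by (intro sum.group) auto
  then show ?thesis by (simp add: square_roots_def)
qed

lemma sum_card_square_roots_shift:
  assumes "finite (carrier R)" "u \<in> carrier R"
  shows "(\<Sum>v\<in>carrier R. card (square_roots (v \<oplus> u))) = card (carrier R)"
  using assms sum_add_shift[where f = "\<lambda>t. card (square_roots t)"] sum_card_square_roots
  by simp

lemma card_hyperbola_le: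
  assumes fin: "finite (carrier R)" and two: "\<one> \<oplus> \<one> \<noteq> \<zero>"
    and \<delta>: "\<delta> \<in> carrier R" "\<delta> \<noteq> \<zero>"
  shows "card {(y, y'). y \<in> carrier R \<and> y' \<in> carrier R \<and> y \<otimes> y \<ominus> y' \<otimes> y' = \<delta>} \<le> card (carrier R)"
proof -
  let ?H = "{(y, y'). y \<in> carrier R \<and> y' \<in> carrier R \<and> y \<otimes> y \<ominus> y' \<otimes> y' = \<delta>}"
  have determined: "y1 = y2 \<and> y1' = y2'"
    if c: "y1 \<in> carrier R" "y1' \<in> carrier R" "y2 \<in> carrier R" "y2' \<in> carrier R"
      and h1: "y1 \<otimes> y1 \<ominus> y1' \<otimes> y1' = \<delta>" and h2: "y2 \<otimes> y2 \<ominus> y2' \<otimes> y2' = \<delta>"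
      and diff: "y1 \<ominus> y1' = y2 \<ominus> y2'"
    for y1 y1' y2 y2'
  proof -
    have prod1: "(y1 \<ominus> y1') \<otimes> (y1 \<oplus> y1') = \<delta>" using h1 c by algebra
    have prod2: "(y1 \<ominus> y1') \<otimes> (y2 \<oplus> y2') = \<delta>" using h2 c diff by algebra
    have "y1 \<ominus> y1' \<noteq> \<zero>" using prod1 \<delta> c by (metis l_null add.m_closed)
    then have sum_eq: "y1 \<oplus> y1' = y2 \<oplus> y2'"
      using prod1 prod2 c by (metis m_lcancel add.m_closed minus_closed)
    have "(\<one> \<oplus> \<one>) \<otimes> y1 = (y1 \<ominus> y1') \<oplus> (y1 \<oplus> y1')" using c by algebra
    also have "\<dots> = (y2 \<ominus> y2') \<oplus> (y2 \<oplus> y2')" using diff sum_eq by simp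
    also have "\<dots> = (\<one> \<oplus> \<one>) \<otimes> y2" using c by algebra
    finally have "y1 = y2" using two c m_lcancel by simp
    then show ?thesis using sum_eq c by simp
  qed
  have "inj_on (\<lambda>(y, y'). y \<ominus> y') ?H"
  proof (rule inj_onI)
    fix p1 p2
    assume "p1 \<in> ?H" "p2 \<in> ?H" "(\<lambda>(y, y'). y \<ominus> y') p1 = (\<lambda>(y, y'). y \<ominus> y') p2"
    moreover obtain y1 y1' y2 y2' where "p1 = (y1, y1')" "p2 = (y2, y2')" by fastforce
    ultimately show "p1 = p2" using determined[of y1 y1' y2 y2'] by auto
  qed
  moreover have "(\<lambda>(y, y'). y \<ominus> y') ` ?H \<subseteq> carrier R" by auto
  ultimately show ?thesis using fin card_inj_on_le by blast
qed

lemma sum_card_square_roots_shift_product_le: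
  assumes fin: "finite (carrier R)" and two: "\<one> \<oplus> \<one> \<noteq> \<zero>"
    and uw: "u \<in> carrier R" "w \<in> carrier R" "u \<noteq> w"
  shows "(\<Sum>v\<in>carrier R. card (square_roots (v \<oplus> u)) * card (square_roots (v \<oplus> w)))
           \<le> card (carrier R)"
proof -
  let ?P = "\<lambda>v. square_roots (v \<oplus> u) \<times> square_roots (v \<oplus> w)"
  let ?H = "{(y, y'). y \<in> carrier R \<and> y' \<in> carrier R \<and> y \<otimes> y \<ominus> y' \<otimes> y' = u \<ominus> w}"
  have disjoint: "?P v \<inter> ?P v' = {}" if "v \<in> carrier R" "v' \<in> carrier R" "v \<noteq> v'" for v v'
    using that uw by (auto simp: square_roots_def)
  have "(\<Sum>v\<in>carrier R. card (square_roots (v \<oplus> u)) * card (square_roots (v \<oplus> w)))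
      = card (\<Union>v\<in>carrier R. ?P v)"
    using fin disjoint by (subst card_UN_disjoint) (auto simp: card_cartesian_product finite_square_roots)
  also have "\<dots> \<le> card ?H"
  proof (rule card_mono)
    show "finite ?H"
      by (rule finite_subset[of _ "carrier R \<times> carrier R"]) (blast, simp add: fin)
    have in_H: "p \<in> ?H" if v: "v \<in> carrier R" and p: "p \<in> ?P v" for v p
    proof -
      obtain y y' where yy': "p = (y, y')" by fastforce
      have "y \<in> carrier R" "y' \<in> carrier R" "y \<otimes> y = v \<oplus> u" "y' \<otimes> y' = v \<oplus> w"
        using p unfolding yy' by (simp_all add: square_roots_def)
      moreover have "(v \<oplus> u) \<ominus> (v \<oplus> w) = u \<ominus> w" using v uw by algebra
      ultimately show ?thesis unfolding yy' by simp
    qed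
    show "(\<Union>v\<in>carrier R. ?P v) \<subseteq> ?H" by (intro UN_least subsetI in_H)
  qed
  also have "\<dots> \<le> card (carrier R)"
    using uw by (intro card_hyperbola_le fin two) auto
  finally show ?thesis .
qed

definition diff_square_reps :: "'a set \<Rightarrow> 'a \<Rightarrow> nat" where
  "diff_square_reps A v = (\<Sum>b\<in>A. card (square_roots (v \<oplus> b \<otimes> b)))"

lemma sum_diff_square_reps:
  assumes fin: "finite (carrier R)" and A: "A \<subseteq> carrier R"
  shows "(\<Sum>v\<in>carrier R. diff_square_reps A v) = card A * card (carrier R)"
proof -
  have "(\<Sum>v\<in>carrier R. diff_square_reps A v)
      = (\<Sum>b\<in>A. \<Sum>v\<in>carrier R. card (square_roots (v \<oplus> b \<otimes> b)))"
    unfolding diff_square_reps_def by (rule sum.swap)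
  also have "\<dots> = (\<Sum>b\<in>A. card (carrier R))"
    using A by (intro sum.cong refl sum_card_square_roots_shift fin) auto
  finally show ?thesis by simp
qed

lemma sum_diff_square_reps_squared_le:
  assumes fin: "finite (carrier R)" and A: "A \<subseteq> carrier R" and two: "\<one> \<oplus> \<one> \<noteq> \<zero>"
  shows "(\<Sum>v\<in>carrier R. diff_square_reps A v ^ 2)
           \<le> card A ^ 2 * card (carrier R) + 2 * card A * card (carrier R)"
proof -
  let ?q = "card (carrier R)"
  let ?r = "\<lambda>b v. card (square_roots (v \<oplus> b \<otimes> b))"
  have fA: "finite A" using fin A finite_subset by blast
  have correlation: "(\<Sum>v\<in>carrier R. ?r b v * ?r b' v) \<le> ?q + (if b' \<in> square_roots (b \<otimes> b) then ?q else 0)"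
    if "b \<in> A" "b' \<in> A" for b b'
  proof (cases "b' \<in> square_roots (b \<otimes> b)")
    case True
    then have "?r b' v = ?r b v" for v by (simp add: square_roots_def)
    then have "(\<Sum>v\<in>carrier R. ?r b v * ?r b' v) \<le> (\<Sum>v\<in>carrier R. 2 * ?r b v)"
      by (simp only:) (intro sum_mono mult_right_mono card_square_roots_le; simp)
    also have "\<dots> = 2 * ?q"
      using that A by (simp add: sum_distrib_left[symmetric] sum_card_square_roots_shift fin subset_iff)
    finally show ?thesis using True by simp
  next
    case False
    then have "b \<otimes> b \<noteq> b' \<otimes> b'" using that A by (auto simp: square_roots_def)
    then have "(\<Sum>v\<in>carrier R. ?r b v * ?r b' v) \<le> ?q"
      using that A by (intro sum_card_square_roots_shift_product_le[OF fin two]) auto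
    then show ?thesis using False by simp
  qed
  have "(\<Sum>v\<in>carrier R. diff_square_reps A v ^ 2)
      = (\<Sum>b\<in>A. \<Sum>b'\<in>A. \<Sum>v\<in>carrier R. ?r b v * ?r b' v)"
    unfolding diff_square_reps_def power2_eq_square sum_product
    by (subst sum.swap, rule sum.cong[OF refl], rule sum.swap)
  also have "\<dots> \<le> (\<Sum>b\<in>A. \<Sum>b'\<in>A. ?q + (if b' \<in> square_roots (b \<otimes> b) then ?q else 0))"
    by (intro sum_mono correlation)
  also have "\<dots> = (\<Sum>b\<in>A. card A * ?q + card (A \<inter> square_roots (b \<otimes> b)) * ?q)"
    using fA by (simp add: sum.distrib flip: sum.inter_restrict)
  also have "\<dots> \<le> (\<Sum>b\<in>A. card A * ?q + 2 * ?q)"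
    by (intro sum_mono add_left_mono mult_right_mono order_trans[OF card_mono card_square_roots_le])
      (auto simp: finite_square_roots)
  finally show ?thesis by (simp add: power2_eq_square algebra_simps)
qed

lemma sum_diff_square_reps_deviation_le:
  assumes fin: "finite (carrier R)" and A: "A \<subseteq> carrier R" and two: "\<one> \<oplus> \<one> \<noteq> \<zero>"
  shows "(\<Sum>v\<in>carrier R. (real (diff_square_reps A v) - real (card A)) ^ 2)
           \<le> 2 * real (card A) * real (card (carrier R))"
proof -
  let ?G = "\<lambda>v. real (diff_square_reps A v)"
  have expand: "(\<Sum>v\<in>carrier R. (?G v - card A) ^ 2)
      = (\<Sum>v\<in>carrier R. ?G v ^ 2) - 2 * card A * (\<Sum>v\<in>carrier R. ?G v)
        + card (carrier R) * card A ^ 2"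
    by (simp add: power2_diff sum.distrib sum_subtractf sum_distrib_left algebra_simps)
  have first: "(\<Sum>v\<in>carrier R. ?G v) = card A * card (carrier R)"
    using sum_diff_square_reps[OF fin A] by (metis of_nat_sum)
  have "real (\<Sum>v\<in>carrier R. diff_square_reps A v ^ 2)
      \<le> real (card A ^ 2 * card (carrier R) + 2 * card A * card (carrier R))"
    using sum_diff_square_reps_squared_le[OF fin A two] by (simp only: of_nat_le_iff)
  then have second: "(\<Sum>v\<in>carrier R. ?G v ^ 2) \<le> card A ^ 2 * card (carrier R) + 2 * card A * card (carrier R)"
    by simp
  show ?thesis
    unfolding expand first using second by (simp add: power2_eq_square algebra_simps)
qed

lemma sum_shifted_squares_le:
  assumes fin: "finite (carrier R)" and A: "A \<subseteq> carrier R" and s: "s \<in> carrier R"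
    and nonneg: "\<And>v. v \<in> carrier R \<Longrightarrow> (0::real) \<le> h v"
  shows "(\<Sum>a\<in>A. h (s \<oplus> a \<otimes> a)) \<le> 2 * (\<Sum>v\<in>carrier R. h v)"
proof -
  have "(\<Sum>a\<in>A. h (s \<oplus> a \<otimes> a)) \<le> (\<Sum>a\<in>carrier R. h (s \<oplus> a \<otimes> a))"
    using fin A s nonneg by (intro sum_mono2) auto
  also have "\<dots> = (\<Sum>t\<in>carrier R. \<Sum>a\<in>{a. a \<in> carrier R \<and> a \<otimes> a = t}. h (s \<oplus> a \<otimes> a))"
    using fin by (intro sum.group[symmetric]) auto
  also have "\<dots> = (\<Sum>t\<in>carrier R. card (square_roots t) * h (t \<oplus> s))"
    using s by (intro sum.cong refl) (simp add: square_roots_def a_comm)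
  also have "\<dots> \<le> (\<Sum>t\<in>carrier R. 2 * h (t \<oplus> s))"
    using s nonneg card_square_roots_le by (intro sum_mono mult_right_mono) auto
  also have "\<dots> = 2 * (\<Sum>v\<in>carrier R. h v)"
    using s by (simp add: sum_distrib_left[symmetric] sum_add_shift)
  finally show ?thesis .
qed

lemma diff_square_reps_le:
  assumes "finite A"
  shows "diff_square_reps A v \<le> 2 * card {b \<in> A. is_square_in R (v \<oplus> b \<otimes> b)}"
proof -
  have "diff_square_reps A v \<le> (\<Sum>b\<in>A. if is_square_in R (v \<oplus> b \<otimes> b) then 2 else 0)"
    unfolding diff_square_reps_def
    by (intro sum_mono) (simp add: card_square_roots_le flip: square_roots_eq_empty_iff)
  also have "\<dots> = 2 * card {b \<in> A. is_square_in R (v \<oplus> b \<otimes> b)}"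
    using assms by (simp flip: sum.inter_filter)
  finally show ?thesis .
qed

lemma square_pair_count_ge:
  assumes fin: "finite (carrier R)" and A: "A \<subseteq> carrier R" and two: "\<one> \<oplus> \<one> \<noteq> \<zero>"
    and s: "s \<in> carrier R" and large: "16 * real (card (carrier R)) \<le> real (card A) ^ 2"
  shows "real (card A) ^ 2 / 4 \<le> (\<Sum>a\<in>A. card {b \<in> A. is_square_in R ((s \<oplus> a \<otimes> a) \<oplus> b \<otimes> b)})"
proof -
  define m where "m = real (card A)"
  define q where "q = real (card (carrier R))"
  define G where "G v = real (diff_square_reps A v)" for v
  have fA: "finite A" using fin A finite_subset by blast
  have "q > 0" using fin s unfolding q_def by (auto simp: card_gt_0_iff)
  then have "m ^ 2 > 0" using large unfolding m_def q_def by linarith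
  then have m: "m > 0" unfolding m_def by simp
  have "(\<Sum>a\<in>A. (G (s \<oplus> a \<otimes> a) - m) ^ 2) \<le> 2 * (\<Sum>v\<in>carrier R. (G v - m) ^ 2)"
    by (rule sum_shifted_squares_le[OF fin A s]) simp
  also have "\<dots> \<le> 2 * (2 * m * q)"
    using sum_diff_square_reps_deviation_le[OF fin A two] unfolding G_def m_def q_def by linarith
  finally have deviation: "(\<Sum>a\<in>A. (G (s \<oplus> a \<otimes> a) - m) ^ 2) \<le> 4 * m * q" by simp
  have "(\<Sum>a\<in>A. (G (s \<oplus> a \<otimes> a) - m) ^ 2) / m \<le> 4 * q"
    using deviation m by (simp add: divide_le_eq algebra_simps)
  then have "3 * m ^ 2 / 4 - 4 * q \<le> 3 * m ^ 2 / 4 - (\<Sum>a\<in>A. (G (s \<oplus> a \<otimes> a) - m) ^ 2) / m"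
    by linarith
  also have "\<dots> = (\<Sum>a\<in>A. 3 * m / 4 - (G (s \<oplus> a \<otimes> a) - m) ^ 2 / m)"
    by (simp add: sum_subtractf sum_divide_distrib m_def power2_eq_square)
  also have "\<dots> \<le> (\<Sum>a\<in>A. G (s \<oplus> a \<otimes> a))"
    by (intro sum_mono ge_three_quarters_minus_deviation m)
  also have "\<dots> \<le> (\<Sum>a\<in>A. 2 * real (card {b \<in> A. is_square_in R ((s \<oplus> a \<otimes> a) \<oplus> b \<otimes> b)}))"
  proof (intro sum_mono)
    fix a
    have "real (diff_square_reps A (s \<oplus> a \<otimes> a))
        \<le> real (2 * card {b \<in> A. is_square_in R ((s \<oplus> a \<otimes> a) \<oplus> b \<otimes> b)})"
      using diff_square_reps_le[OF fA] by (simp only: of_nat_le_iff)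
    then show "G (s \<oplus> a \<otimes> a) \<le> 2 * real (card {b \<in> A. is_square_in R ((s \<oplus> a \<otimes> a) \<oplus> b \<otimes> b)})"
      unfolding G_def by simp
  qed
  finally show ?thesis
    using large unfolding m_def q_def by (simp add: sum_distrib_left[symmetric])
qed

definition shifted_square_sum_tuples :: "'a set \<Rightarrow> nat \<Rightarrow> 'a \<Rightarrow> (nat \<Rightarrow> 'a) set" where
  "shifted_square_sum_tuples A d s =
     {x \<in> {..<d} \<rightarrow>\<^sub>E A. is_square_in R (s \<oplus> finsum R (\<lambda>i. x i \<otimes> x i) {..<d})}"

lemma square_sum_tuples_eq_shifted:
  assumes "A \<subseteq> carrier R"
  shows "square_sum_tuples R A d = shifted_square_sum_tuples A d \<zero>"
proof -
  have "\<zero> \<oplus> finsum R (\<lambda>i. x i \<otimes> x i) {..<d} = finsum R (\<lambda>i. x i \<otimes> x i) {..<d}"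
    if "x \<in> {..<d} \<rightarrow>\<^sub>E A" for x
    using that assms by (intro l_zero finsum_closed) (auto simp: PiE_iff)
  then show ?thesis
    unfolding square_sum_tuples_def shifted_square_sum_tuples_def by auto
qed

lemma card_shifted_square_sum_tuples_0:
  assumes "s \<in> carrier R"
  shows "card (shifted_square_sum_tuples A 0 s) = (if is_square_in R s then 1 else 0)"
  using assms by (simp add: shifted_square_sum_tuples_def)

lemma finsum_squares_fun_upd:
  assumes "a \<in> carrier R" "y \<in> {..<d} \<rightarrow> carrier R"
  shows "finsum R (\<lambda>i. (y(d := a)) i \<otimes> (y(d := a)) i) {..<Suc d}
           = a \<otimes> a \<oplus> finsum R (\<lambda>i. y i \<otimes> y i) {..<d}"
proof -
  have "finsum R (\<lambda>i. (y(d := a)) i \<otimes> (y(d := a)) i) {..<d} = finsum R (\<lambda>i. y i \<otimes> y i) {..<d}"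
    using assms by (intro finsum_cong') auto
  then show ?thesis
    using assms unfolding lessThan_Suc by (subst finsum_insert) (auto simp: Pi_iff)
qed

lemma shifted_square_sum_tuples_Suc:
  assumes A: "A \<subseteq> carrier R" and s: "s \<in> carrier R"
  shows "shifted_square_sum_tuples A (Suc d) s
           = (\<lambda>(a, y). y(d := a)) ` (SIGMA a:A. shifted_square_sum_tuples A d (s \<oplus> a \<otimes> a))"
proof -
  let ?P = "\<lambda>s x d. is_square_in R (s \<oplus> finsum R (\<lambda>i. x i \<otimes> x i) {..<d})"
  have PiE_Suc: "{..<Suc d} \<rightarrow>\<^sub>E A = (\<lambda>(a, y). y(d := a)) ` (A \<times> ({..<d} \<rightarrow>\<^sub>E A))"
    by (simp add: lessThan_Suc PiE_insert_eq)
  have "?P s (y(d := a)) (Suc d) \<longleftrightarrow> ?P (s \<oplus> a \<otimes> a) y d"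
    if "a \<in> A" "y \<in> {..<d} \<rightarrow>\<^sub>E A" for a y
  proof -
    have a: "a \<in> carrier R" and y: "y \<in> {..<d} \<rightarrow> carrier R" using that A by (auto simp: PiE_iff)
    have "s \<oplus> finsum R (\<lambda>i. (y(d := a)) i \<otimes> (y(d := a)) i) {..<Suc d}
        = (s \<oplus> a \<otimes> a) \<oplus> finsum R (\<lambda>i. y i \<otimes> y i) {..<d}"
    proof -
      have "finsum R (\<lambda>i. y i \<otimes> y i) {..<d} \<in> carrier R" using y by (intro finsum_closed) auto
      then show ?thesis unfolding finsum_squares_fun_upd[OF a y] using s a by (simp add: a_assoc)
    qed
    then show ?thesis by simp
  qed
  then show ?thesis
    unfolding shifted_square_sum_tuples_def PiE_Suc by (auto simp: image_iff)
qed

lemma card_shifted_square_sum_tuples_Suc: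
  assumes fA: "finite A" and A: "A \<subseteq> carrier R" and s: "s \<in> carrier R"
  shows "card (shifted_square_sum_tuples A (Suc d) s)
           = (\<Sum>a\<in>A. card (shifted_square_sum_tuples A d (s \<oplus> a \<otimes> a)))"
proof -
  have "inj_on (\<lambda>(a, y). y(d := a)) (SIGMA a:A. shifted_square_sum_tuples A d (s \<oplus> a \<otimes> a))"
    by (rule inj_on_subset[OF inj_combinator[of d "{..<d}" "\<lambda>_. A"]])
      (auto simp: shifted_square_sum_tuples_def)
  moreover have "finite (shifted_square_sum_tuples A d t)" for t
  proof (rule finite_subset)
    show "shifted_square_sum_tuples A d t \<subseteq> {..<d} \<rightarrow>\<^sub>E A"
      unfolding shifted_square_sum_tuples_def by blast
    show "finite ({..<d} \<rightarrow>\<^sub>E A)" using fA by (simp add: finite_PiE)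
  qed
  ultimately show ?thesis
    using fA A s by (simp add: shifted_square_sum_tuples_Suc card_image card_SigmaI)
qed

lemma card_shifted_square_sum_tuples_2_ge:
  assumes fin: "finite (carrier R)" and A: "A \<subseteq> carrier R" and s: "s \<in> carrier R"
    and large: "16 * real (card (carrier R)) \<le> real (card A) ^ 2"
  shows "real (card A) ^ 2 / 4 \<le> card (shifted_square_sum_tuples A 2 s)"
proof -
  have fA: "finite A" using fin A finite_subset by blast
  have "card (shifted_square_sum_tuples A 2 s)
      = (\<Sum>a\<in>A. card {b \<in> A. is_square_in R ((s \<oplus> a \<otimes> a) \<oplus> b \<otimes> b)})"
    using fA A s
    by (simp add: numeral_2_eq_2 card_shifted_square_sum_tuples_Suc card_shifted_square_sum_tuples_0
        subset_iff flip: sum.inter_filter)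
  also have "real \<dots> \<ge> real (card A) ^ 2 / 4"
  proof (cases "\<one> \<oplus> \<one> = \<zero>")
    case True
    have "{b \<in> A. is_square_in R ((s \<oplus> a \<otimes> a) \<oplus> b \<otimes> b)} = A" if "a \<in> A" for a
      using that A s by (auto intro!: is_square_in_if_char_two[OF fin True])
    then show ?thesis by (simp add: power2_eq_square)
  next
    case False
    then show ?thesis using square_pair_count_ge[OF fin A False s large] by simp
  qed
  finally show ?thesis .
qed

lemma card_shifted_square_sum_tuples_ge:
  assumes fin: "finite (carrier R)" and A: "A \<subseteq> carrier R"
    and large: "16 * real (card (carrier R)) \<le> real (card A) ^ 2"
    and d: "2 \<le> d" and s: "s \<in> carrier R"
  shows "real (card A) ^ d / 4 \<le> card (shifted_square_sum_tuples A d s)"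
  using d s
proof (induction d arbitrary: s rule: nat_induct_at_least)
  case base
  then show ?case by (rule card_shifted_square_sum_tuples_2_ge[OF fin A _ large])
next
  case (Suc n)
  have fA: "finite A" using fin A finite_subset by blast
  have "real (card A) ^ Suc n / 4 = (\<Sum>a\<in>A. real (card A) ^ n / 4)" by simp
  also have "\<dots> \<le> (\<Sum>a\<in>A. real (card (shifted_square_sum_tuples A n (s \<oplus> a \<otimes> a))))"
    using Suc.IH Suc.prems A by (intro sum_mono) auto
  also have "\<dots> = card (shifted_square_sum_tuples A (Suc n) s)"
    using card_shifted_square_sum_tuples_Suc[OF fA A Suc.prems] by simp
  finally show ?case .
qed

end

theorem lemma6p2:
  fixes d :: nat
  assumes "d \<ge> 3"
  shows "\<exists>c > 0. \<exists>C > 0. \<forall>(R :: nat ring) A.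
           field R \<and> finite (carrier R) \<and>
           (\<exists>p k. Factorial_Ring.prime (p::nat) \<and> odd p \<and> k > 0 \<and> card (carrier R) = p ^ k) \<and>
           A \<subseteq> carrier R \<and> real (card A) \<ge> c * sqrt (real (card (carrier R)))
           \<longrightarrow> real (card (square_sum_tuples R A d)) \<ge> C * real (card A) ^ d"
proof -
  have "real (card (square_sum_tuples R A d)) \<ge> 1 / 4 * real (card A) ^ d"
    if "field R" "finite (carrier R)" "A \<subseteq> carrier R"
      and large: "4 * sqrt (real (card (carrier R))) \<le> real (card A)" for R :: "nat ring" and A
  proof -
    interpret field R by fact
    have "(4 * sqrt (real (card (carrier R)))) ^ 2 \<le> real (card A) ^ 2"
      using large by (intro power_mono) auto
    then have "16 * real (card (carrier R)) \<le> real (card A) ^ 2"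
      by (simp add: power_mult_distrib)
    then show ?thesis
      using card_shifted_square_sum_tuples_ge[of A d "\<zero>\<^bsub>R\<^esub>"]
        square_sum_tuples_eq_shifted[of A d] that assms
      by simp
  qed
  then show ?thesis
    by (intro exI[of _ "4 :: real"] exI[of _ "1 / 4 :: real"] conjI allI impI) auto
qed

end
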